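(* Let $X = \langle x_1,\dots,x_L\rangle$ be a random sequence with distribution $p$ over $\mathcal{V}^L$ for a finite vocabulary $\mathcal{V}$, fix distinct indices $i,j$ and fix the values of the other tokens $X_{\setminus\{i,j\}}$. Let $p_\theta(\cdot \mid X_{\setminus i})$ be any model assigning, for every masked sequence $X_{\setminus i}$, a probability distribution over $\mathcal{V}$ for the masked token. Define $$I_p = \mathbb{E}_{x_i,x_j}\Big[\log p\big(x_i \mid X_{\setminus i}(j,x_j)\big) - \log \mathbb{E}_{x_j'}\, p\big(x_i \mid X_{\setminus i}(j,x_j')\big)\Big],$$ $$\hat I_{p_\theta} = \mathbb{E}_{x_i,x_j}\Big[\log p_\theta\big(x_i \mid X_{\setminus i}(j,x_j)\big) - \log \mathbb{E}_{x_j'}\, p_\theta\big(x_i \mid X_{\setminus i}(j,x_j')\big)\Big],$$ where $(x_i,x_j)$ is drawn from the true conditional distribution $p(x_i,x_j \mid X_{\setminus\{i,j\}})$ and $x_j'$ is drawn from $p(x_j \mid X_{\setminus\{i,j\}})$ (so $I_p = I_p(x_i;x_j\mid X_{\setminus\{i,j\}})$ is the conditional mutual information). Then $$\big|\hat I_{p_\theta} - I_p\big| \le \mathbb{E}_{x_j}\, D_{\mathrm{KL}}\Big(p\big(x_i \mid X_{\setminus i}(j,x_j)\big)\,\Big\|\, p_\theta\big(x_i \mid X_{\setminus i}(j,x_j)\big)\Big),$$ with $x_j \sim p(x_j\mid X_{\setminus\{i,j\}})$.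
   Context: For a sequence $X$, $X_{\setminus i}$ denotes $X$ with the $i$th token replaced by a special mask token, and $X_{\setminus\{i,j\}}$ denotes $X$ with both the $i$th and $j$th tokens masked. $X(j,v)$ denotes $X$ with its $j$th token replaced by $v \in \mathcal{V}$; thus $X_{\setminus i}(j,x_j)$ is the sequence with token $i$ masked, token $j$ equal to $x_j$, and all other tokens fixed. $D_{\mathrm{KL}}$ is the Kullback–Leibler divergence (possibly $+\infty$, in which case the bound is trivial). *)

theory Defs
  imports "HOL-Probability.Probability"
begin

text \<open>Sequences are functions from a finite position type 'i (the L positions) to a
finite vocabulary 'v.  A masked sequence is a function 'i => 'v option, where None
is the mask token.\<close>

definition mask1 :: "'i \<Rightarrow> ('i \<Rightarrow> 'v) \<Rightarrow> ('i \<Rightarrow> 'v option)" where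
  "mask1 i y = (\<lambda>k. if k = i then None else Some (y k))"

definition cond_tok :: "('i \<Rightarrow> 'v::finite) pmf \<Rightarrow> 'i \<Rightarrow> ('i \<Rightarrow> 'v) \<Rightarrow> 'v \<Rightarrow> real" where
  "cond_tok p i y a = pmf p (y(i := a)) / (\<Sum>a'\<in>UNIV. pmf p (y(i := a')))"

definition cond_pair :: "('i \<Rightarrow> 'v::finite) pmf \<Rightarrow> 'i \<Rightarrow> 'i \<Rightarrow> ('i \<Rightarrow> 'v) \<Rightarrow> 'v \<Rightarrow> 'v \<Rightarrow> real" where
  "cond_pair p i j x0 a b = pmf p (x0(i := a, j := b)) /
     (\<Sum>a'\<in>UNIV. \<Sum>b'\<in>UNIV. pmf p (x0(i := a', j := b')))"

definition cond_j :: "('i \<Rightarrow> 'v::finite) pmf \<Rightarrow> 'i \<Rightarrow> 'i \<Rightarrow> ('i \<Rightarrow> 'v) \<Rightarrow> 'v \<Rightarrow> real" where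
  "cond_j p i j x0 b = (\<Sum>a\<in>UNIV. cond_pair p i j x0 a b)"

definition I_true :: "('i \<Rightarrow> 'v::finite) pmf \<Rightarrow> 'i \<Rightarrow> 'i \<Rightarrow> ('i \<Rightarrow> 'v) \<Rightarrow> real" where
  "I_true p i j x0 = (\<Sum>a\<in>UNIV. \<Sum>b\<in>UNIV. cond_pair p i j x0 a b *
      (ln (cond_tok p i (x0(j := b)) a)
       - ln (\<Sum>b'\<in>UNIV. cond_j p i j x0 b' * cond_tok p i (x0(j := b')) a)))"

definition I_model :: "('i \<Rightarrow> 'v::finite) pmf \<Rightarrow> (('i \<Rightarrow> 'v option) \<Rightarrow> 'v pmf)
      \<Rightarrow> 'i \<Rightarrow> 'i \<Rightarrow> ('i \<Rightarrow> 'v) \<Rightarrow> real" where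
  "I_model p pth i j x0 = (\<Sum>a\<in>UNIV. \<Sum>b\<in>UNIV. cond_pair p i j x0 a b *
      (ln (pmf (pth (mask1 i (x0(j := b)))) a)
       - ln (\<Sum>b'\<in>UNIV. cond_j p i j x0 b' * pmf (pth (mask1 i (x0(j := b')))) a)))"

definition KL :: "('v::finite \<Rightarrow> real) \<Rightarrow> ('v \<Rightarrow> real) \<Rightarrow> ereal" where
  "KL P Q = (if \<exists>a. P a > 0 \<and> Q a = 0 then \<infinity>
             else ereal (\<Sum>a\<in>{a. P a > 0}. P a * ln (P a / Q a)))"

end

(* Write w for the conditional law of x_j, and Q b, M b for the true and the model
   conditional laws of x_i given x_j = b.  Both I_p and its model estimate are the
   cross information  sum_{a,b} w b * Q b a * (ln (M b a) - ln (Mbar a)),  with M = Q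
   and M = p_theta respectively, where Mbar = sum_b w b * M b is the mixture.  Their
   difference is  D(Qbar || Mbar) - sum_b w b * D(Q b || M b).  The first term is
   nonnegative by Gibbs' inequality and bounded by the second by joint convexity of
   relative entropy, which gives the bound. *)

theory Submission
  imports Defs
begin

definition rel_entropy :: "('a::finite \<Rightarrow> real) \<Rightarrow> ('a \<Rightarrow> real) \<Rightarrow> real" where
  "rel_entropy P Q = (\<Sum>a\<in>UNIV. P a * (ln (P a) - ln (Q a)))"

definition mixture :: "('b::finite \<Rightarrow> real) \<Rightarrow> ('b \<Rightarrow> 'a \<Rightarrow> real) \<Rightarrow> 'a \<Rightarrow> real" where
  "mixture w K a = (\<Sum>b\<in>UNIV. w b * K b a)"

definition cross_info ::
    "('b::finite \<Rightarrow> real) \<Rightarrow> ('b \<Rightarrow> 'a::finite \<Rightarrow> real) \<Rightarrow> ('b \<Rightarrow> 'a \<Rightarrow> real) \<Rightarrow> real" where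
  "cross_info w Q M =
     (\<Sum>a\<in>UNIV. \<Sum>b\<in>UNIV. w b * Q b a * (ln (M b a) - ln (mixture w M a)))"

lemma mult_ln_diff_le:
  fixes p q :: real
  assumes "0 \<le> p" "0 \<le> q" "0 < p \<Longrightarrow> 0 < q"
  shows "p * (ln q - ln p) \<le> q - p"
proof (cases "p = 0")
  case False
  with assms have "0 < p" "0 < q" by auto
  then have "p * (ln q - ln p) = p * ln (q / p)" by (simp add: ln_div)
  also have "\<dots> \<le> p * (q / p - 1)"
    using \<open>0 < p\<close> \<open>0 < q\<close> by (intro mult_left_mono ln_le_minus_one) auto
  also have "\<dots> = q - p" using \<open>0 < p\<close> by (simp add: field_simps)
  finally show ?thesis .
qed (use assms in simp)

lemma rel_entropy_nonneg:
  assumes "\<And>a. 0 \<le> P a" "\<And>a. 0 \<le> Q a" "\<And>a. 0 < P a \<Longrightarrow> 0 < Q a"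
    and "sum Q UNIV \<le> sum P UNIV"
  shows "0 \<le> rel_entropy P Q"
proof -
  have "(\<Sum>a\<in>UNIV. P a * (ln (Q a) - ln (P a))) \<le> (\<Sum>a\<in>UNIV. Q a - P a)"
    using assms by (intro sum_mono mult_ln_diff_le) auto
  with assms(4) show ?thesis
    by (simp add: rel_entropy_def sum_subtractf right_diff_distrib sum_negf[symmetric])
qed

lemma rel_entropy_mixture_eq:
  "rel_entropy (mixture w Q) (mixture w M) =
     (\<Sum>a\<in>UNIV. \<Sum>b\<in>UNIV. w b * Q b a * (ln (mixture w Q a) - ln (mixture w M a)))"
  unfolding rel_entropy_def by (simp add: mixture_def sum_distrib_right)

lemma sum_mult_rel_entropy_eq:
  "(\<Sum>b\<in>UNIV. w b * rel_entropy (Q b) (M b)) =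
     (\<Sum>a\<in>UNIV. \<Sum>b\<in>UNIV. w b * Q b a * (ln (Q b a) - ln (M b a)))"
  unfolding rel_entropy_def by (subst sum.swap) (simp add: sum_distrib_left mult.assoc)

lemma cross_info_diff_eq:
  "cross_info w Q Q - cross_info w Q M =
     (\<Sum>b\<in>UNIV. w b * rel_entropy (Q b) (M b)) - rel_entropy (mixture w Q) (mixture w M)"
  unfolding cross_info_def rel_entropy_mixture_eq sum_mult_rel_entropy_eq sum_subtractf[symmetric]
  by (intro sum.cong refl) (simp add: algebra_simps)

lemma mixture_nonneg:
  assumes "\<And>b. 0 \<le> w b" "\<And>b. 0 \<le> K b a"
  shows "0 \<le> mixture w K a"
  unfolding mixture_def using assms by (simp add: sum_nonneg)

lemma mixture_pos_mono:
  assumes "\<And>b. 0 \<le> w b" "\<And>b a. 0 \<le> Q b a" "\<And>b a. 0 \<le> M b a"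
    and "\<And>b a. 0 < w b \<Longrightarrow> 0 < Q b a \<Longrightarrow> 0 < M b a"
    and "0 < mixture w Q a"
  shows "0 < mixture w M a"
proof -
  have "(\<Sum>b\<in>UNIV. w b * Q b a) \<noteq> 0"
    using assms(5) unfolding mixture_def by simp
  then obtain b where "w b * Q b a \<noteq> 0"
    by (rule sum.not_neutral_contains_not_neutral)
  with assms(1,2) have "0 < w b" "0 < Q b a" by (auto simp: less_le)
  with assms(4) have "0 < w b * M b a" by simp
  also have "\<dots> \<le> mixture w M a"
    unfolding mixture_def using assms(1,3) by (intro member_le_sum) auto
  finally show ?thesis .
qed

text \<open>Joint convexity of relative entropy, via Gibbs' inequality for the joint weights
  \<open>w b * Q b a\<close> against \<open>w b * M b a * mixture w Q a / mixture w M a\<close>.\<close>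
lemma rel_entropy_mixture_le:
  assumes w: "\<And>b. 0 \<le> w b" and Q: "\<And>b a. 0 \<le> Q b a" and M: "\<And>b a. 0 \<le> M b a"
    and supp: "\<And>b a. 0 < w b \<Longrightarrow> 0 < Q b a \<Longrightarrow> 0 < M b a"
  shows "rel_entropy (mixture w Q) (mixture w M) \<le> (\<Sum>b\<in>UNIV. w b * rel_entropy (Q b) (M b))"
proof -
  let ?mQ = "mixture w Q" and ?mM = "mixture w M"
  have term_le: "w b * Q b a * (ln (M b a) - ln (Q b a) - (ln (?mM a) - ln (?mQ a)))
      \<le> w b * M b a * (?mQ a / ?mM a) - w b * Q b a" for a b
  proof (cases "0 < w b \<and> 0 < Q b a")
    case True
    then have pos: "0 < w b" "0 < Q b a" "0 < M b a" using supp by auto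
    have "0 < w b * Q b a" using pos by simp
    also have "\<dots> \<le> ?mQ a" unfolding mixture_def using w Q by (intro member_le_sum) auto
    finally have "0 < ?mQ a" .
    have "0 < w b * M b a" using pos by simp
    also have "\<dots> \<le> ?mM a" unfolding mixture_def using w M by (intro member_le_sum) auto
    finally have "0 < ?mM a" .
    have "ln (M b a) - ln (Q b a) - (ln (?mM a) - ln (?mQ a))
        = ln (w b * M b a * (?mQ a / ?mM a)) - ln (w b * Q b a)"
      using pos \<open>0 < ?mQ a\<close> \<open>0 < ?mM a\<close> by (simp add: ln_mult ln_div)
    moreover have "w b * Q b a * (ln (w b * M b a * (?mQ a / ?mM a)) - ln (w b * Q b a))
        \<le> w b * M b a * (?mQ a / ?mM a) - w b * Q b a"
      using pos \<open>0 < ?mQ a\<close> \<open>0 < ?mM a\<close> by (intro mult_ln_diff_le) auto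
    ultimately show ?thesis by simp
  next
    case False
    then have "w b * Q b a = 0" using w[of b] Q[of b a] by (auto simp: less_le)
    moreover have "0 \<le> w b * M b a * (?mQ a / ?mM a)"
      using w M mixture_nonneg[of w Q a] mixture_nonneg[of w M a] Q M by simp
    ultimately show ?thesis by (metis diff_zero mult_zero_left)
  qed
  have row_le: "(\<Sum>b\<in>UNIV. w b * M b a * (?mQ a / ?mM a) - w b * Q b a) \<le> 0" for a
  proof -
    have "(\<Sum>b\<in>UNIV. w b * M b a * (?mQ a / ?mM a) - w b * Q b a) = ?mM a * (?mQ a / ?mM a) - ?mQ a"
      unfolding sum_subtractf sum_distrib_right[symmetric] by (simp only: mixture_def)
    also have "\<dots> \<le> 0"
      using mixture_nonneg[of w Q a] w Q by (cases "?mM a = 0") auto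
    finally show ?thesis .
  qed
  have "rel_entropy ?mQ ?mM - (\<Sum>b\<in>UNIV. w b * rel_entropy (Q b) (M b))
      = (\<Sum>a\<in>UNIV. \<Sum>b\<in>UNIV. w b * Q b a * (ln (M b a) - ln (Q b a) - (ln (?mM a) - ln (?mQ a))))"
    unfolding rel_entropy_mixture_eq sum_mult_rel_entropy_eq sum_subtractf[symmetric]
    by (intro sum.cong refl) (simp add: algebra_simps)
  also have "\<dots> \<le> (\<Sum>a\<in>UNIV. \<Sum>b\<in>UNIV. w b * M b a * (?mQ a / ?mM a) - w b * Q b a)"
    by (intro sum_mono term_le)
  also have "\<dots> \<le> 0" by (intro sum_nonpos row_le)
  finally show ?thesis by simp
qed

lemma cross_info_deviation_le:
  assumes w: "\<And>b. 0 \<le> w b" and Q: "\<And>b a. 0 \<le> Q b a" and M: "\<And>b a. 0 \<le> M b a"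
    and supp: "\<And>b a. 0 < w b \<Longrightarrow> 0 < Q b a \<Longrightarrow> 0 < M b a"
    and mass: "sum (mixture w M) UNIV \<le> sum (mixture w Q) UNIV"
  shows "\<bar>cross_info w Q M - cross_info w Q Q\<bar> \<le> (\<Sum>b\<in>UNIV. w b * rel_entropy (Q b) (M b))"
proof -
  have "0 \<le> rel_entropy (mixture w Q) (mixture w M)"
  proof (rule rel_entropy_nonneg)
    show "0 \<le> mixture w Q a" "0 \<le> mixture w M a" for a
      by (intro mixture_nonneg w Q M)+
    show "0 < mixture w M a" if "0 < mixture w Q a" for a
      by (rule mixture_pos_mono[of w Q M, OF w Q M supp that])
  qed (fact mass)
  moreover have "rel_entropy (mixture w Q) (mixture w M) \<le> (\<Sum>b\<in>UNIV. w b * rel_entropy (Q b) (M b))"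
    using w Q M supp by (rule rel_entropy_mixture_le)
  ultimately show ?thesis using cross_info_diff_eq[of w Q M] by linarith
qed

lemma KL_eq_rel_entropy:
  assumes "\<And>a. 0 \<le> P a" and "\<And>a. 0 < P a \<Longrightarrow> 0 < Q a"
  shows "KL P Q = ereal (rel_entropy P Q)"
proof -
  have "(\<Sum>a\<in>{a. 0 < P a}. P a * ln (P a / Q a)) = (\<Sum>a\<in>UNIV. P a * (ln (P a) - ln (Q a)))"
  proof (rule sum.mono_neutral_cong_left)
    show "\<forall>a\<in>UNIV - {a. 0 < P a}. P a * (ln (P a) - ln (Q a)) = 0"
    proof
      fix a assume "a \<in> UNIV - {a. 0 < P a}"
      with assms(1)[of a] have "P a = 0" by simp
      then show "P a * (ln (P a) - ln (Q a)) = 0" by simp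
    qed
    show "P a * ln (P a / Q a) = P a * (ln (P a) - ln (Q a))" if "a \<in> {a. 0 < P a}" for a
      using that assms(2)[of a] by (simp add: ln_div)
  qed auto
  moreover have "\<not> (\<exists>a. 0 < P a \<and> Q a = 0)"
    using assms(2) by (metis less_irrefl)
  ultimately show ?thesis unfolding KL_def rel_entropy_def by simp
qed

lemma ereal_mult_KL_eq_rel_entropy:
  assumes "0 \<le> w" "\<And>a. 0 \<le> P a" "\<And>a. 0 < w \<Longrightarrow> 0 < P a \<Longrightarrow> 0 < Q a"
  shows "ereal w * KL P Q = ereal (w * rel_entropy P Q)"
proof (cases "w = 0")
  case False
  with assms have "KL P Q = ereal (rel_entropy P Q)" by (intro KL_eq_rel_entropy) auto
  then show ?thesis by simp
qed (simp add: zero_ereal_def[symmetric])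

lemma cross_info_deviation_le_KL:
  assumes w: "\<And>b. 0 \<le> w b" and Q: "\<And>b a. 0 \<le> Q b a" and M: "\<And>b a. 0 \<le> M b a"
    and mass: "sum (mixture w M) UNIV \<le> sum (mixture w Q) UNIV"
  shows "ereal \<bar>cross_info w Q M - cross_info w Q Q\<bar> \<le> (\<Sum>b\<in>UNIV. ereal (w b) * KL (Q b) (M b))"
proof (cases "\<exists>b a. 0 < w b \<and> 0 < Q b a \<and> M b a = 0")
  case True
  then obtain b a where "0 < w b" "0 < Q b a" "M b a = 0" by blast
  then have "ereal (w b) * KL (Q b) (M b) = \<infinity>" by (auto simp: KL_def)
  then have "(\<Sum>b\<in>UNIV. ereal (w b) * KL (Q b) (M b)) = \<infinity>" by (auto simp: sum_Pinfty)
  then show ?thesis by simp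
next
  case False
  then have supp: "0 < M b a" if "0 < w b" "0 < Q b a" for b a
    using M[of b a] that by (auto simp: less_le)
  have "ereal \<bar>cross_info w Q M - cross_info w Q Q\<bar>
      \<le> ereal (\<Sum>b\<in>UNIV. w b * rel_entropy (Q b) (M b))"
    using cross_info_deviation_le[of w Q M, OF w Q M supp mass] by simp
  also have "\<dots> = (\<Sum>b\<in>UNIV. ereal (w b) * KL (Q b) (M b))"
    using w Q supp by (simp add: ereal_mult_KL_eq_rel_entropy)
  finally show ?thesis .
qed

lemma cond_tok_nonneg: "0 \<le> cond_tok p i y a"
  unfolding cond_tok_def by (simp add: sum_nonneg)

lemma cond_j_nonneg: "0 \<le> cond_j p i j x0 b"
  unfolding cond_j_def cond_pair_def by (simp add: sum_nonneg)

lemma cond_pair_eq_cond_j_mult_cond_tok: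
  assumes "i \<noteq> j"
  shows "cond_pair p i j x0 a b = cond_j p i j x0 b * cond_tok p i (x0(j := b)) a"
proof -
  define Z where "Z = (\<Sum>a'\<in>UNIV. \<Sum>b'\<in>UNIV. pmf p (x0(i := a', j := b')))"
  define S where "S = (\<Sum>a'\<in>UNIV. pmf p (x0(i := a', j := b)))"
  have upd: "(x0(j := b))(i := a') = x0(i := a', j := b)" for a'
    using assms by (simp add: fun_upd_twist)
  have "cond_j p i j x0 b = S / Z"
    unfolding cond_j_def cond_pair_def S_def Z_def by (simp add: sum_divide_distrib)
  moreover have "cond_tok p i (x0(j := b)) a = pmf p (x0(i := a, j := b)) / S"
    unfolding cond_tok_def upd S_def ..
  moreover have "pmf p (x0(i := a, j := b)) \<le> S"
    unfolding S_def by (intro member_le_sum) auto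
  ultimately show ?thesis
    unfolding cond_pair_def Z_def[symmetric] by (cases "S = 0") auto
qed

lemma I_true_eq_cross_info:
  assumes "i \<noteq> j"
  shows "I_true p i j x0 = cross_info (cond_j p i j x0)
     (\<lambda>b. cond_tok p i (x0(j := b))) (\<lambda>b. cond_tok p i (x0(j := b)))"
  unfolding I_true_def cross_info_def mixture_def
  by (simp add: cond_pair_eq_cond_j_mult_cond_tok[OF assms])

lemma I_model_eq_cross_info:
  assumes "i \<noteq> j"
  shows "I_model p pth i j x0 = cross_info (cond_j p i j x0)
     (\<lambda>b. cond_tok p i (x0(j := b))) (\<lambda>b. pmf (pth (mask1 i (x0(j := b)))))"
  unfolding I_model_def cross_info_def mixture_def
  by (simp add: cond_pair_eq_cond_j_mult_cond_tok[OF assms])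

lemma sum_mixture_pmf:
  fixes K :: "'b::finite \<Rightarrow> 'a::finite pmf"
  shows "sum (mixture w (\<lambda>b. pmf (K b))) UNIV = sum w UNIV"
  unfolding mixture_def by (subst sum.swap) (simp add: sum_distrib_left[symmetric] sum_pmf_eq_1)

lemma sum_mixture_cond_tok:
  assumes "i \<noteq> j"
  shows "sum (mixture (cond_j p i j x0) (\<lambda>b. cond_tok p i (x0(j := b)))) UNIV
     = sum (cond_j p i j x0) UNIV"
proof -
  have "sum (mixture (cond_j p i j x0) (\<lambda>b. cond_tok p i (x0(j := b)))) UNIV
      = (\<Sum>a\<in>UNIV. \<Sum>b\<in>UNIV. cond_pair p i j x0 a b)"
    by (simp add: mixture_def cond_pair_eq_cond_j_mult_cond_tok[OF assms])
  also have "\<dots> = sum (cond_j p i j x0) UNIV"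
    unfolding cond_j_def by (rule sum.swap)
  finally show ?thesis .
qed

theorem proposition4:
  fixes p :: "('i::finite \<Rightarrow> 'v::finite) pmf"
    and pth :: "('i \<Rightarrow> 'v option) \<Rightarrow> 'v pmf"
    and i j :: 'i
    and x0 :: "'i \<Rightarrow> 'v"
  assumes "i \<noteq> j"
    and "(\<Sum>a\<in>UNIV. \<Sum>b\<in>UNIV. pmf p (x0(i := a, j := b))) > 0"
  shows "ereal \<bar>I_model p pth i j x0 - I_true p i j x0\<bar>
     \<le> (\<Sum>b\<in>UNIV. ereal (cond_j p i j x0 b) *
          KL (\<lambda>a. cond_tok p i (x0(j := b)) a) (\<lambda>a. pmf (pth (mask1 i (x0(j := b)))) a))"
proof -
  let ?w = "cond_j p i j x0"
    and ?Q = "\<lambda>b. cond_tok p i (x0(j := b))"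
    and ?M = "\<lambda>b. pmf (pth (mask1 i (x0(j := b))))"
  have "ereal \<bar>cross_info ?w ?Q ?M - cross_info ?w ?Q ?Q\<bar>
      \<le> (\<Sum>b\<in>UNIV. ereal (?w b) * KL (?Q b) (?M b))"
  proof (rule cross_info_deviation_le_KL)
    show "0 \<le> ?w b" for b by (rule cond_j_nonneg)
    show "0 \<le> ?Q b a" for b a by (rule cond_tok_nonneg)
    show "0 \<le> ?M b a" for b a by (rule pmf_nonneg)
    show "sum (mixture ?w ?M) UNIV \<le> sum (mixture ?w ?Q) UNIV"
      unfolding sum_mixture_pmf sum_mixture_cond_tok[OF assms(1)] ..
  qed
  then show ?thesis
    by (simp only: I_model_eq_cross_info[OF assms(1)] I_true_eq_cross_info[OF assms(1)])
qed

end
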